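(* Let $\mu$ and $\nu$ be probability measures on $\mathbb{R}$ and let $n\ge1$ be an integer. If $m_{2n}(\mu)<\infty$ and $m_{2n}(\nu)<\infty$, then $m_{2n}(\mu\rhd\nu)<\infty$, and for $1\le l\le 2n$, $$m_l(\mu\rhd\nu)=m_l(\mu)+m_l(\nu)+\sum_{k=1}^{l-1}\ \sum_{\substack{j_0+j_1+\cdots+j_k=l-k\\ j_p\ge0,\ 0\le p\le k}} m_k(\mu)\,m_{j_0}(\nu)\cdots m_{j_k}(\nu).$$
   Context: $m_k(\mu):=\int_{\mathbb{R}}x^k\,\mu(dx)$ denotes the $k$-th moment (so $m_0=1$). For a probability measure $\mu$, $G_\mu(z)=\int\frac{1}{z-x}d\mu(x)$ on $\mathbb{C}^+$ and $H_\mu=1/G_\mu$; the monotone convolution $\mu\rhd\nu$ is the unique probability measure with $H_{\mu\rhd\nu}=H_\mu\circ H_\nu$. *)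

theory Defs
  imports "HOL-Probability.Probability"
begin

definition real_prob_measure :: "real measure \<Rightarrow> bool" where
  "real_prob_measure M \<longleftrightarrow> prob_space M \<and> sets M = sets borel"

definition moment :: "real measure \<Rightarrow> nat \<Rightarrow> real" where
  "moment M k = integral\<^sup>L M (\<lambda>x. x ^ k)"

definition cauchy_transform :: "real measure \<Rightarrow> complex \<Rightarrow> complex" where
  "cauchy_transform M z = integral\<^sup>L M (\<lambda>x. 1 / (z - complex_of_real x))"

definition F_transform :: "real measure \<Rightarrow> complex \<Rightarrow> complex" where
  "F_transform M z = 1 / cauchy_transform M z"

text \<open>rho is the monotone convolution of mu and nu: the (unique) probability
  measure with H_rho = H_mu o H_nu on the upper half plane.\<close>
definition is_monotone_convolution :: "real measure \<Rightarrow> real measure \<Rightarrow> real measure \<Rightarrow> bool" where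
  "is_monotone_convolution \<mu> \<nu> \<rho> \<longleftrightarrow> real_prob_measure \<rho> \<and>
     (\<forall>z. Im z > 0 \<longrightarrow> F_transform \<rho> z = F_transform \<mu> (F_transform \<nu> z))"

end

theory Submission
  imports Defs "HOL-Computational_Algebra.Polynomial"
begin

text \<open>A probability measure has a finite moment of order \<open>2n\<close> iff its Cauchy transform admits an
  asymptotic expansion \<open>G(z) = \<Sum>k\<le>2n. m\<^sub>k / z ^ Suc k + o(\<bar>z\<bar> ^ -(2n+1))\<close> as \<open>z \<rightarrow> \<infinity>\<close>
  nontangentially; the expansion then carries the moments as coefficients. One direction is
  dominated convergence, the other an induction on the moment order, by monotone convergence of
  \<open>\<integral> x ^ (2m+2) y\<^sup>2 / (x\<^sup>2 + y\<^sup>2)\<close> as \<open>y \<rightarrow> \<infinity>\<close>.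
  Since \<open>F\<^sub>\<nu>(iy) \<sim> iy\<close> tends to infinity nontangentially and \<open>1 / F\<^sub>\<nu> = G\<^sub>\<nu>\<close>, the relation
  \<open>G\<^sub>\<rho> = G\<^sub>\<mu> \<circ> F\<^sub>\<nu>\<close> gives \<open>G\<^sub>\<rho>(iy) = P\<^sub>\<mu>(G\<^sub>\<nu>(iy)) + o(y ^ -(2n+1))\<close> with \<open>P\<^sub>\<mu>\<close> the moment polynomial
  of \<open>\<mu>\<close>; substituting the expansion of \<open>G\<^sub>\<nu>\<close> shows that \<open>G\<^sub>\<rho>\<close> expands along \<open>P\<^sub>\<mu> \<circ> P\<^sub>\<nu>\<close>, whose
  coefficients, computed via weak compositions, are the claimed moments of \<open>\<rho>\<close>.\<close>

section \<open>Weak compositions and coefficients of composed series\<close>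

definition weak_compositions :: "nat \<Rightarrow> nat \<Rightarrow> nat list set" where
  "weak_compositions m d = {js. length js = m \<and> sum_list js = d}"

lemma finite_weak_compositions: "finite (weak_compositions m d)"
proof (rule finite_subset)
  show "weak_compositions m d \<subseteq> {xs. set xs \<subseteq> {..d} \<and> length xs = m}"
    unfolding weak_compositions_def using member_le_sum_list by fastforce
qed (rule finite_lists_length_eq, simp)

lemma weak_compositions_Suc:
  "weak_compositions (Suc m) d = (\<lambda>(i, js). i # js) ` (SIGMA i:{..d}. weak_compositions m (d - i))"
  by (auto simp: weak_compositions_def length_Suc_conv image_iff)

lemma weak_compositions_Suc_0: "weak_compositions (Suc 0) d = {[d]}"
  by (auto simp: weak_compositions_def length_Suc_conv)

lemma weak_compositions_zero: "weak_compositions m 0 = {replicate m 0}"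
  by (auto simp: weak_compositions_def intro: replicate_length_same[symmetric])

lemma coeff_power_weak_compositions:
  fixes p :: "'a::comm_semiring_1 poly"
  shows "coeff (p ^ m) d = (\<Sum>js\<in>weak_compositions m d. prod_list (map (coeff p) js))"
proof (induction m arbitrary: d)
  case 0
  have "weak_compositions 0 d = (if d = 0 then {[]} else {})"
    by (auto simp: weak_compositions_def)
  then show ?case by simp
next
  case (Suc m)
  have inj: "inj_on (\<lambda>(i, js). i # js) (SIGMA i:{..d}. weak_compositions m (d - i))"
    by (auto simp: inj_on_def)
  have "coeff (p ^ Suc m) d = (\<Sum>i\<le>d. coeff p i * coeff (p ^ m) (d - i))"
    by (simp add: coeff_mult)
  also have "\<dots> = (\<Sum>i\<le>d. \<Sum>js\<in>weak_compositions m (d - i). coeff p i * prod_list (map (coeff p) js))"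
    by (simp add: Suc sum_distrib_left)
  also have "\<dots> = (\<Sum>(i, js)\<in>(SIGMA i:{..d}. weak_compositions m (d - i)). prod_list (map (coeff p) (i # js)))"
    by (subst sum.Sigma) (auto simp: finite_weak_compositions)
  also have "\<dots> = (\<Sum>js\<in>weak_compositions (Suc m) d. prod_list (map (coeff p) js))"
    unfolding weak_compositions_Suc by (subst sum.reindex[OF inj]) (simp add: case_prod_beta')
  finally show ?case .
qed

text \<open>In the variable \<open>t = 1 / z\<close>, \<open>cauchy_series_poly c N\<close> is the truncated series
  \<open>\<Sum>k\<le>N. c k / z ^ Suc k\<close>, the shape of the expansion of a Cauchy transform at infinity.\<close>

definition cauchy_series_poly :: "(nat \<Rightarrow> 'a::comm_monoid_add) \<Rightarrow> nat \<Rightarrow> 'a poly" where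
  "cauchy_series_poly c N = (\<Sum>k\<le>N. monom (c k) (Suc k))"

lemma coeff_cauchy_series_poly:
  "coeff (cauchy_series_poly c N) j = (if 1 \<le> j \<and> j \<le> Suc N then c (j - 1) else 0)"
  by (cases j) (auto simp: cauchy_series_poly_def coeff_sum coeff_monom)

lemma poly_cauchy_series_poly:
  fixes c :: "nat \<Rightarrow> 'a::comm_semiring_1"
  shows "poly (cauchy_series_poly c N) t = (\<Sum>k\<le>N. c k * t ^ Suc k)"
  by (simp add: cauchy_series_poly_def poly_sum poly_monom)

lemma pcompose_monom: "pcompose (monom a n) p = smult a (p ^ n)"
  by (simp add: pcompose_altdef map_poly_monom poly_monom smult_conv_map_poly)

lemma coeff_pcompose_cauchy_series_poly:
  fixes c d :: "nat \<Rightarrow> 'a::comm_semiring_1"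
  assumes "l \<le> N"
  shows "coeff (pcompose (cauchy_series_poly c N) (cauchy_series_poly d N)) (Suc l) =
    (\<Sum>k\<le>l. c k * (\<Sum>js\<in>weak_compositions (Suc k) (l - k). prod_list (map d js)))"
proof -
  define Q where "Q = (\<Sum>j\<le>N. monom (d j) j)"
  have coeff_Q: "coeff Q j = d j" if "j \<le> N" for j
    using that by (simp add: Q_def coeff_sum coeff_monom)
  have "cauchy_series_poly d N = monom 1 1 * Q"
    by (simp add: cauchy_series_poly_def Q_def sum_distrib_left mult_monom)
  then have "cauchy_series_poly d N ^ Suc k = monom 1 (Suc k) * Q ^ Suc k" for k
    by (simp only: power_mult_distrib monom_power) simp
  then have "coeff (pcompose (cauchy_series_poly c N) (cauchy_series_poly d N)) (Suc l) =
      (\<Sum>k\<le>N. c k * (if l < k then 0 else coeff (Q ^ Suc k) (l - k)))"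
    by (simp add: cauchy_series_poly_def pcompose_sum pcompose_monom coeff_sum coeff_monom_mult
        del: power_Suc cong: if_cong)
  also have "\<dots> = (\<Sum>k\<le>l. c k * coeff (Q ^ Suc k) (l - k))"
    using assms by (intro sum.mono_neutral_cong_right) auto
  also have "\<dots> = (\<Sum>k\<le>l. c k * (\<Sum>js\<in>weak_compositions (Suc k) (l - k). prod_list (map d js)))"
  proof (intro sum.cong refl arg_cong2[where f = "(*)"])
    fix k assume "k \<in> {..l}"
    have map_coeff_Q: "map (coeff Q) js = map d js" if "js \<in> weak_compositions (Suc k) (l - k)" for js
      using that assms member_le_sum_list[of _ js]
      by (intro map_cong refl coeff_Q) (fastforce simp: weak_compositions_def)
    then show "coeff (Q ^ Suc k) (l - k) = (\<Sum>js\<in>weak_compositions (Suc k) (l - k). prod_list (map d js))"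
      unfolding coeff_power_weak_compositions by (intro sum.cong refl) (simp only: map_coeff_Q)
  qed
  finally show ?thesis .
qed

lemma sum_weak_compositions_split_ends:
  fixes c d :: "nat \<Rightarrow> 'a::comm_semiring_1"
  assumes "c 0 = 1" and "d 0 = 1" and "1 \<le> l"
  shows "(\<Sum>k\<le>l. c k * (\<Sum>js\<in>weak_compositions (Suc k) (l - k). prod_list (map d js))) =
    c l + d l + (\<Sum>k = 1..l - 1. \<Sum>js\<in>{js. length js = Suc k \<and> sum_list js = l - k}.
      c k * prod_list (map d js))"
proof -
  obtain l' where l: "l = Suc l'" using assms(3) by (cases l) auto
  have "{..l} = insert 0 (insert l {1..l'})" by (auto simp: l)
  then show ?thesis
    using assms by (simp add: l weak_compositions_Suc_0 weak_compositions_zero sum_distrib_left)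
      (simp add: weak_compositions_def ac_simps)
qed

section \<open>Asymptotic expansions along the imaginary axis\<close>

definition has_poly_expansion :: "(real \<Rightarrow> complex) \<Rightarrow> complex poly \<Rightarrow> nat \<Rightarrow> bool" where
  "has_poly_expansion f p K \<longleftrightarrow>
     ((\<lambda>y. (f y - poly p (1 / (\<i> * of_real y))) * (\<i> * of_real y) ^ K) \<longlongrightarrow> 0) at_top"

lemma eventually_ii_nonzero: "eventually (\<lambda>y::real. \<i> * complex_of_real y \<noteq> 0) at_top"
  by (rule eventually_mono[OF eventually_gt_at_top[of 0]]) simp

lemma tendsto_inverse_ii: "((\<lambda>y::real. 1 / (\<i> * complex_of_real y)) \<longlongrightarrow> 0) at_top"
proof -
  have "((\<lambda>y::real. - \<i> * complex_of_real (inverse y)) \<longlongrightarrow> - \<i> * complex_of_real 0) at_top"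
    by (intro tendsto_intros tendsto_inverse_0_at_top filterlim_ident)
  then show ?thesis by (simp add: divide_complex_def)
qed

lemma tendsto_poly_inverse_ii_scaled:
  assumes "\<forall>j<d. coeff p j = 0"
  shows "((\<lambda>y. poly p (1 / (\<i> * of_real y)) * (\<i> * of_real y) ^ d) \<longlongrightarrow> coeff p d) at_top"
proof -
  obtain s where p: "p = monom 1 d * s"
    using assms monom_1_dvd_iff'[of d p] by (auto elim: dvdE)
  have "((\<lambda>y. poly s (1 / (\<i> * of_real y))) \<longlongrightarrow> poly s 0) at_top"
    by (rule tendsto_poly[OF tendsto_inverse_ii])
  moreover have "poly s 0 = coeff p d"
    by (simp add: p coeff_monom_mult poly_0_coeff_0)
  moreover have "eventually (\<lambda>y. poly s (1 / (\<i> * of_real y)) =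
      poly p (1 / (\<i> * of_real y)) * (\<i> * of_real y) ^ d) at_top"
    using eventually_ii_nonzero by eventually_elim (simp add: p poly_monom power_one_over)
  ultimately show ?thesis by (simp add: tendsto_cong)
qed

lemma tendsto_poly_inverse_ii: "((\<lambda>y. poly p (1 / (\<i> * of_real y))) \<longlongrightarrow> coeff p 0) at_top"
  using tendsto_poly_inverse_ii_scaled[of 0 p] by simp

lemma has_poly_expansion_mono:
  assumes "has_poly_expansion f p K" and "K' \<le> K"
  shows "has_poly_expansion f p K'"
proof -
  let ?z = "\<lambda>y::real. \<i> * complex_of_real y"
  have "((\<lambda>y. (f y - poly p (1 / ?z y)) * ?z y ^ K * poly (monom 1 (K - K')) (1 / ?z y))
      \<longlongrightarrow> 0 * coeff (monom 1 (K - K')) 0) at_top"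
    using assms(1) unfolding has_poly_expansion_def by (intro tendsto_mult tendsto_poly_inverse_ii)
  moreover have "eventually (\<lambda>y. (f y - poly p (1 / ?z y)) * ?z y ^ K * poly (monom 1 (K - K')) (1 / ?z y)
      = (f y - poly p (1 / ?z y)) * ?z y ^ K') at_top"
    using eventually_ii_nonzero
  proof eventually_elim
    case (elim y)
    have "?z y ^ K = ?z y ^ (K - K') * ?z y ^ K'"
      using assms(2) by (simp flip: power_add)
    then show ?case using elim by (simp add: poly_monom power_one_over)
  qed
  ultimately show ?thesis unfolding has_poly_expansion_def by (simp add: tendsto_cong)
qed

lemma has_poly_expansion_tendsto:
  assumes "has_poly_expansion f p K"
  shows "(f \<longlongrightarrow> coeff p 0) at_top"
proof -
  have "((\<lambda>y. (f y - poly p (1 / (\<i> * of_real y))) + poly p (1 / (\<i> * of_real y))) \<longlongrightarrow> 0 + coeff p 0) at_top"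
    using has_poly_expansion_mono[OF assms, of 0]
    by (intro tendsto_add tendsto_poly_inverse_ii) (simp add: has_poly_expansion_def)
  then show ?thesis by simp
qed

lemma has_poly_expansion_transfer:
  assumes "((\<lambda>y. (f y - g y) * (\<i> * of_real y) ^ K) \<longlongrightarrow> 0) at_top" and "has_poly_expansion g p K"
  shows "has_poly_expansion f p K"
  using tendsto_add[OF assms(1) assms(2)[unfolded has_poly_expansion_def]]
  unfolding has_poly_expansion_def by (simp add: algebra_simps)

lemma has_poly_expansion_coeff_cong:
  assumes "has_poly_expansion f p K" and "\<forall>d\<le>K. coeff p d = coeff q d"
  shows "has_poly_expansion f q K"
proof -
  let ?t = "\<lambda>y::real. 1 / (\<i> * complex_of_real y)"
  have "((\<lambda>y. poly (p - q) (?t y) * (\<i> * of_real y) ^ K) \<longlongrightarrow> coeff (p - q) K) at_top"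
    using assms(2) by (intro tendsto_poly_inverse_ii_scaled) simp
  then have "((\<lambda>y. (f y - poly p (?t y)) * (\<i> * of_real y) ^ K + poly (p - q) (?t y) * (\<i> * of_real y) ^ K)
      \<longlongrightarrow> 0 + 0) at_top"
    using assms unfolding has_poly_expansion_def by (intro tendsto_add) auto
  then show ?thesis
    unfolding has_poly_expansion_def by (simp add: algebra_simps)
qed

lemma has_poly_expansion_unique:
  assumes "has_poly_expansion f p K" and "has_poly_expansion f q K" and "d \<le> K"
  shows "coeff p d = coeff q d"
  using assms(3)
proof (induction d rule: less_induct)
  case (less d)
  let ?t = "\<lambda>y::real. 1 / (\<i> * complex_of_real y)"
  have "((\<lambda>y. (f y - poly q (?t y)) * (\<i> * of_real y) ^ d - (f y - poly p (?t y)) * (\<i> * of_real y) ^ d)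
      \<longlongrightarrow> 0 - 0) at_top"
    using has_poly_expansion_mono[OF assms(1) less.prems] has_poly_expansion_mono[OF assms(2) less.prems]
    unfolding has_poly_expansion_def by (rule tendsto_diff[rotated])
  then have "((\<lambda>y. poly (p - q) (?t y) * (\<i> * of_real y) ^ d) \<longlongrightarrow> 0) at_top"
    by (simp add: algebra_simps)
  moreover have "((\<lambda>y. poly (p - q) (?t y) * (\<i> * of_real y) ^ d) \<longlongrightarrow> coeff (p - q) d) at_top"
    using less by (intro tendsto_poly_inverse_ii_scaled) simp
  ultimately have "coeff (p - q) d = 0"
    using tendsto_unique[OF trivial_limit_at_top_linorder] by blast
  then show ?case by simp
qed

lemma has_poly_expansion_const: "has_poly_expansion (\<lambda>_. c) [:c:] K"
  by (simp add: has_poly_expansion_def)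

lemma has_poly_expansion_add:
  assumes "has_poly_expansion f p K" and "has_poly_expansion g q K"
  shows "has_poly_expansion (\<lambda>y. f y + g y) (p + q) K"
  using tendsto_add[OF assms[unfolded has_poly_expansion_def]]
  unfolding has_poly_expansion_def by (simp add: algebra_simps)

lemma has_poly_expansion_mult:
  assumes f: "has_poly_expansion f p K" and g: "has_poly_expansion g q K"
  shows "has_poly_expansion (\<lambda>y. f y * g y) (p * q) K"
proof -
  let ?t = "\<lambda>y::real. 1 / (\<i> * complex_of_real y)"
  have "((\<lambda>y. ((f y - poly p (?t y)) * (\<i> * of_real y) ^ K) * g y
      + poly p (?t y) * ((g y - poly q (?t y)) * (\<i> * of_real y) ^ K)) \<longlongrightarrow> 0 * coeff q 0 + coeff p 0 * 0) at_top"
    using f g unfolding has_poly_expansion_def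
    by (intro tendsto_intros has_poly_expansion_tendsto[OF g] tendsto_poly_inverse_ii)
  then show ?thesis
    unfolding has_poly_expansion_def by (simp add: algebra_simps)
qed

lemma has_poly_expansion_poly_comp:
  assumes "has_poly_expansion f p K"
  shows "has_poly_expansion (\<lambda>y. poly q (f y)) (pcompose q p) K"
proof (induction q)
  case 0
  show ?case using has_poly_expansion_const[of 0] by simp
next
  case (pCons a q)
  show ?case
    using has_poly_expansion_add[OF has_poly_expansion_const has_poly_expansion_mult[OF assms pCons.IH]]
    by (simp add: pcompose_pCons)
qed

section \<open>Expansion of the Cauchy transform of a measure with finite moments\<close>

definition moment_poly :: "real measure \<Rightarrow> nat \<Rightarrow> complex poly" where
  "moment_poly M N = cauchy_series_poly (\<lambda>k. complex_of_real (moment M k)) N"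

lemma prob_space_real_prob_measure: "real_prob_measure M \<Longrightarrow> prob_space M"
  by (simp add: real_prob_measure_def)

lemma sets_real_prob_measure: "real_prob_measure M \<Longrightarrow> sets M = sets borel"
  by (simp add: real_prob_measure_def)

lemma moment_0: "real_prob_measure M \<Longrightarrow> moment M 0 = 1"
  using prob_space.prob_space[OF prob_space_real_prob_measure]
  by (simp add: moment_def)

lemma integrable_power_le_even:
  assumes M: "real_prob_measure M" and "integrable M (\<lambda>x. x ^ (2 * n))" and "k \<le> 2 * n"
  shows "integrable M (\<lambda>x::real. x ^ k)"
proof (rule Bochner_Integration.integrable_bound[where f = "\<lambda>x. 1 + x ^ (2 * n)"])
  interpret prob_space M using M by (rule prob_space_real_prob_measure)
  show "integrable M (\<lambda>x. 1 + x ^ (2 * n))" using assms(2) by simp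
  show "(\<lambda>x. x ^ k) \<in> borel_measurable M"
    by (simp add: measurable_cong_sets[OF sets_real_prob_measure[OF M] refl])
  show "AE x in M. norm (x ^ k) \<le> norm (1 + x ^ (2 * n))"
  proof (rule AE_I2)
    fix x :: real
    have "\<bar>x\<bar> ^ k \<le> 1 + \<bar>x\<bar> ^ (2 * n)"
    proof (cases "\<bar>x\<bar> \<le> 1")
      case True
      then show ?thesis by (simp add: power_le_one add_increasing2)
    next
      case False
      then have "\<bar>x\<bar> ^ k \<le> \<bar>x\<bar> ^ (2 * n)" by (intro power_increasing assms(3)) simp
      then show ?thesis by simp
    qed
    then show "norm (x ^ k) \<le> norm (1 + x ^ (2 * n))"
      by (simp add: power_abs power_mult power_even_abs)
  qed
qed

lemma Im_le_norm_diff_of_real: "Im w \<le> cmod (w - complex_of_real x)"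
  using abs_Im_le_cmod[of "w - complex_of_real x"] by simp

lemma integrable_cauchy_kernel:
  assumes M: "real_prob_measure M" and w: "Im w > 0"
  shows "integrable M (\<lambda>x. 1 / (w - complex_of_real x))"
proof (rule Bochner_Integration.integrable_bound[where f = "\<lambda>x. 1 / Im w"])
  interpret prob_space M using M by (rule prob_space_real_prob_measure)
  show "integrable M (\<lambda>x. 1 / Im w)" by simp
  show "(\<lambda>x. 1 / (w - complex_of_real x)) \<in> borel_measurable M"
    by (subst measurable_cong_sets[OF sets_real_prob_measure[OF M] refl]) measurable
  show "AE x in M. norm (1 / (w - complex_of_real x)) \<le> norm (1 / Im w)"
    using w Im_le_norm_diff_of_real by (intro AE_I2) (simp add: norm_divide frac_le)
qed

lemma inverse_diff_geometric_remainder: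
  fixes w x :: complex
  assumes "w \<noteq> 0" and "w \<noteq> x"
  shows "1 / (w - x) - (\<Sum>k\<le>N. x ^ k / w ^ Suc k) = x ^ Suc N / (w ^ Suc N * (w - x))"
proof (induction N)
  case (Suc N)
  have "1 / (w - x) - (\<Sum>k\<le>Suc N. x ^ k / w ^ Suc k)
      = x ^ Suc N / (w ^ Suc N * (w - x)) - x ^ Suc N / w ^ Suc (Suc N)"
    using Suc by simp
  also have "\<dots> = x ^ Suc (Suc N) / (w ^ Suc (Suc N) * (w - x))"
    using assms by (simp add: field_simps)
  finally show ?case .
qed (use assms in \<open>simp add: field_simps\<close>)

lemma cauchy_transform_remainder:
  assumes M: "real_prob_measure M" and I: "integrable M (\<lambda>x. x ^ (2 * n))" and v: "Im v > 0"
  shows "(cauchy_transform M v - poly (moment_poly M (2 * n)) (1 / v)) * v ^ Suc (2 * n)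
      = integral\<^sup>L M (\<lambda>x. complex_of_real x ^ Suc (2 * n) / (v - complex_of_real x))"
proof -
  have v0: "v \<noteq> 0" and vx: "v \<noteq> complex_of_real x" for x using v by auto
  have int_k: "integrable M (\<lambda>x. complex_of_real x ^ k / v ^ Suc k)" if "k \<le> 2 * n" for k
    using integrable_divide[OF integrable_of_real[OF integrable_power_le_even[OF M I that]]]
    by simp
  have "poly (moment_poly M (2 * n)) (1 / v)
      = (\<Sum>k\<le>2 * n. integral\<^sup>L M (\<lambda>x. complex_of_real x ^ k / v ^ Suc k))"
    by (simp add: moment_poly_def poly_cauchy_series_poly moment_def power_one_over
        flip: integral_complex_of_real)
  also have "\<dots> = integral\<^sup>L M (\<lambda>x. \<Sum>k\<le>2 * n. complex_of_real x ^ k / v ^ Suc k)"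
    using int_k by (intro Bochner_Integration.integral_sum[symmetric]) auto
  finally have "cauchy_transform M v - poly (moment_poly M (2 * n)) (1 / v)
      = integral\<^sup>L M (\<lambda>x. 1 / (v - complex_of_real x) - (\<Sum>k\<le>2 * n. complex_of_real x ^ k / v ^ Suc k))"
    unfolding cauchy_transform_def
    using integrable_cauchy_kernel[OF M v] int_k by (subst Bochner_Integration.integral_diff) auto
  also have "\<dots> = integral\<^sup>L M (\<lambda>x. (complex_of_real x ^ Suc (2 * n) / (v - complex_of_real x)) / v ^ Suc (2 * n))"
    by (intro Bochner_Integration.integral_cong refl, subst inverse_diff_geometric_remainder[OF v0 vx])
      (simp add: field_simps)
  also have "\<dots> = integral\<^sup>L M (\<lambda>x. complex_of_real x ^ Suc (2 * n) / (v - complex_of_real x)) / v ^ Suc (2 * n)"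
    by (rule integral_divide_zero)
  finally show ?thesis using v0 by simp
qed

lemma norm_power_div_diff_le_Im:
  assumes "0 < Im w"
  shows "norm (complex_of_real x ^ k / (w - of_real x)) \<le> \<bar>x\<bar> ^ k / Im w"
proof -
  have "0 < cmod (w - complex_of_real x) * Im w"
    using assms Im_le_norm_diff_of_real[of w x] by (intro mult_pos_pos) auto
  then show ?thesis
    by (simp add: norm_divide norm_power divide_left_mono Im_le_norm_diff_of_real)
qed

lemma norm_power_div_diff_le_cone:
  assumes "0 < Im w" and "norm w \<le> C * Im w"
  shows "norm (complex_of_real x ^ Suc k / (w - of_real x)) \<le> (1 + C) * \<bar>x\<bar> ^ k"
proof -
  let ?d = "cmod (w - complex_of_real x)"
  have d: "Im w \<le> ?d" by (rule Im_le_norm_diff_of_real)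
  have "0 \<le> C * Im w"
    using assms norm_ge_zero[of w] by linarith
  with assms(1) have "0 \<le> C"
    by (simp add: zero_le_mult_iff)
  then have "cmod w \<le> C * ?d"
    using assms d by (smt (verit) mult_left_mono)
  moreover have "\<bar>x\<bar> \<le> ?d + cmod w"
    using norm_triangle_sub[of "complex_of_real x" w] by (simp add: norm_minus_commute)
  ultimately have "\<bar>x\<bar> \<le> (1 + C) * ?d"
    by (simp add: algebra_simps)
  moreover have "0 < ?d" using d assms(1) by linarith
  ultimately have "\<bar>x\<bar> / ?d \<le> 1 + C"
    by (simp add: pos_divide_le_eq)
  have "norm (complex_of_real x ^ Suc k / (w - of_real x)) = \<bar>x\<bar> ^ k * (\<bar>x\<bar> / ?d)"
    by (simp add: norm_divide norm_mult norm_power power_Suc2)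
  also have "\<dots> \<le> \<bar>x\<bar> ^ k * (1 + C)"
    using \<open>\<bar>x\<bar> / ?d \<le> 1 + C\<close> by (rule mult_left_mono) simp
  finally show ?thesis by (simp only: mult.commute)
qed

lemma cauchy_transform_expansion_nontangential:
  fixes w :: "real \<Rightarrow> complex"
  assumes M: "real_prob_measure M" and I: "integrable M (\<lambda>x. x ^ (2 * n))"
    and Im_w: "filterlim (\<lambda>y. Im (w y)) at_top at_top"
    and cone: "eventually (\<lambda>y. norm (w y) \<le> C * Im (w y)) at_top"
  shows "((\<lambda>y. (cauchy_transform M (w y) - poly (moment_poly M (2 * n)) (1 / w y)) * w y ^ Suc (2 * n))
    \<longlongrightarrow> 0) at_top"
proof -
  interpret prob_space M using M by (rule prob_space_real_prob_measure)
  let ?h = "\<lambda>y x. complex_of_real x ^ Suc (2 * n) / (w y - complex_of_real x)"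
  have pos: "eventually (\<lambda>y. Im (w y) > 0) at_top"
    using Im_w unfolding filterlim_at_top_dense by auto
  have "((\<lambda>y. integral\<^sup>L M (?h y)) \<longlongrightarrow> integral\<^sup>L M (\<lambda>x. 0)) at_top"
  proof (rule integral_dominated_convergence_at_top[where w = "\<lambda>x. (1 + C) * x ^ (2 * n)"])
    show "?h y \<in> borel_measurable M" for y
      by (subst measurable_cong_sets[OF sets_real_prob_measure[OF M] refl]) measurable
    show "integrable M (\<lambda>x. (1 + C) * x ^ (2 * n))" using I by simp
    show "AE x in M. ((\<lambda>y. ?h y x) \<longlongrightarrow> 0) at_top"
    proof (rule AE_I2, rule Lim_null_comparison)
      fix x :: real
      show "((\<lambda>y. \<bar>x\<bar> ^ Suc (2 * n) / Im (w y)) \<longlongrightarrow> 0) at_top"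
        by (rule tendsto_divide_0[OF tendsto_const filterlim_at_top_imp_at_infinity[OF Im_w]])
      show "\<forall>\<^sub>F y in at_top. norm (?h y x) \<le> \<bar>x\<bar> ^ Suc (2 * n) / Im (w y)"
        using pos by eventually_elim (rule norm_power_div_diff_le_Im)
    qed
    show "\<forall>\<^sub>F y in at_top. AE x in M. norm (?h y x) \<le> (1 + C) * x ^ (2 * n)"
      using pos cone
    proof eventually_elim
      case (elim y)
      have "\<bar>x\<bar> ^ (2 * n) = x ^ (2 * n)" for x :: real by (simp add: power_even_abs)
      then show ?case
        using norm_power_div_diff_le_cone[OF elim, of _ "2 * n"] by (intro AE_I2) simp
    qed
  qed simp
  moreover have "eventually (\<lambda>y. integral\<^sup>L M (?h y) =
      (cauchy_transform M (w y) - poly (moment_poly M (2 * n)) (1 / w y)) * w y ^ Suc (2 * n)) at_top"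
    using pos by eventually_elim (rule cauchy_transform_remainder[OF M I, symmetric])
  ultimately show ?thesis by (simp add: tendsto_cong)
qed

lemma has_poly_expansion_cauchy_transform:
  assumes "real_prob_measure M" and "integrable M (\<lambda>x. x ^ (2 * n))"
  shows "has_poly_expansion (\<lambda>y. cauchy_transform M (\<i> * of_real y)) (moment_poly M (2 * n)) (Suc (2 * n))"
proof -
  have "eventually (\<lambda>y::real. norm (\<i> * complex_of_real y) \<le> 1 * Im (\<i> * complex_of_real y)) at_top"
    by (rule eventually_mono[OF eventually_ge_at_top[of 0]]) (simp add: norm_mult)
  from cauchy_transform_expansion_nontangential[OF assms _ this]
  show ?thesis unfolding has_poly_expansion_def by (simp add: filterlim_ident)
qed

lemma tendsto_ii_mult_cauchy_transform:
  assumes M: "real_prob_measure M"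
  shows "((\<lambda>y. \<i> * of_real y * cauchy_transform M (\<i> * of_real y)) \<longlongrightarrow> 1) at_top"
proof -
  interpret prob_space M using M by (rule prob_space_real_prob_measure)
  have "integrable M (\<lambda>x. x ^ (2 * 0))" by simp
  from has_poly_expansion_cauchy_transform[OF M this]
  have "((\<lambda>y. (cauchy_transform M (\<i> * of_real y) - 1 / (\<i> * of_real y)) * (\<i> * of_real y) + 1) \<longlongrightarrow> 0 + 1) at_top"
    by (intro tendsto_add tendsto_const)
      (simp add: has_poly_expansion_def moment_poly_def poly_cauchy_series_poly moment_0[OF M])
  moreover have "eventually (\<lambda>y. (cauchy_transform M (\<i> * of_real y) - 1 / (\<i> * of_real y)) * (\<i> * of_real y) + 1
      = \<i> * of_real y * cauchy_transform M (\<i> * of_real y)) at_top"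
    using eventually_ii_nonzero by eventually_elim (simp add: field_simps)
  ultimately show ?thesis by (simp add: tendsto_cong)
qed

section \<open>Finite moments from an expansion\<close>

lemma moment_eq_coeff_of_expansion:
  assumes M: "real_prob_measure M" and I: "integrable M (\<lambda>x. x ^ (2 * n))"
    and E: "has_poly_expansion (\<lambda>y. cauchy_transform M (\<i> * of_real y)) p K"
    and "Suc (2 * n) \<le> K" and "k \<le> 2 * n"
  shows "coeff p (Suc k) = of_real (moment M k)"
  using has_poly_expansion_unique[OF has_poly_expansion_mono[OF E assms(4)]
      has_poly_expansion_cauchy_transform[OF M I], of "Suc k"] assms(5)
  by (simp add: moment_poly_def coeff_cauchy_series_poly)

lemma damping_weight_mono:
  fixes x p q :: real
  assumes "0 < p" and "p \<le> q"
  shows "p\<^sup>2 / (x\<^sup>2 + p\<^sup>2) \<le> q\<^sup>2 / (x\<^sup>2 + q\<^sup>2)"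
proof -
  have "p\<^sup>2 * x\<^sup>2 \<le> q\<^sup>2 * x\<^sup>2"
    using assms by (intro mult_right_mono power_mono) auto
  then show ?thesis
    using assms by (simp add: frac_le_eq add_pos_nonneg divide_le_0_iff algebra_simps)
qed

lemma tendsto_damping_weight: "((\<lambda>y::real. y\<^sup>2 / (x\<^sup>2 + y\<^sup>2)) \<longlongrightarrow> 1) at_top"
  for x :: real
proof -
  have "((\<lambda>y. 1 / (1 + x\<^sup>2 * (inverse y)\<^sup>2)) \<longlongrightarrow> 1 / (1 + x\<^sup>2 * 0\<^sup>2)) at_top"
    by (intro tendsto_intros tendsto_inverse_0_at_top filterlim_ident) simp
  moreover have "eventually (\<lambda>y. 1 / (1 + x\<^sup>2 * (inverse y)\<^sup>2) = y\<^sup>2 / (x\<^sup>2 + y\<^sup>2)) at_top"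
    by (rule eventually_mono[OF eventually_gt_at_top[of 0]]) (simp add: field_simps)
  ultimately show ?thesis by (simp add: tendsto_cong)
qed

lemma integrable_of_tendsto_damped_integral:
  fixes g :: "real \<Rightarrow> real"
  assumes meas: "g \<in> borel_measurable M" and nonneg: "\<And>x. 0 \<le> g x"
    and int: "\<And>y. 0 < y \<Longrightarrow> integrable M (\<lambda>x. g x * (y\<^sup>2 / (x\<^sup>2 + y\<^sup>2)))"
    and lim: "((\<lambda>y. \<integral>x. g x * (y\<^sup>2 / (x\<^sup>2 + y\<^sup>2)) \<partial>M) \<longlongrightarrow> b) at_top"
  shows "integrable M g"
proof (rule integral_monotone_convergence_nonneg)
  let ?s = "\<lambda>i::nat. real (Suc i)"
  have s_top: "filterlim ?s at_top sequentially"
    by (rule filterlim_compose[OF filterlim_real_sequentially filterlim_Suc])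
  show "integrable M (\<lambda>x. g x * ((?s i)\<^sup>2 / (x\<^sup>2 + (?s i)\<^sup>2)))" for i
    by (rule int) simp
  show "AE x in M. mono (\<lambda>i. g x * ((?s i)\<^sup>2 / (x\<^sup>2 + (?s i)\<^sup>2)))"
    by (intro AE_I2 monoI mult_left_mono nonneg damping_weight_mono) auto
  show "AE x in M. 0 \<le> g x * ((?s i)\<^sup>2 / (x\<^sup>2 + (?s i)\<^sup>2))" for i
    using nonneg by (intro AE_I2 mult_nonneg_nonneg) auto
  show "AE x in M. (\<lambda>i. g x * ((?s i)\<^sup>2 / (x\<^sup>2 + (?s i)\<^sup>2))) \<longlonglongrightarrow> g x"
    using tendsto_mult[OF tendsto_const filterlim_compose[OF tendsto_damping_weight s_top]]
    by (intro AE_I2) simp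
  show "(\<lambda>i. \<integral>x. g x * ((?s i)\<^sup>2 / (x\<^sup>2 + (?s i)\<^sup>2)) \<partial>M) \<longlonglongrightarrow> b"
    by (rule filterlim_compose[OF lim s_top])
qed (rule meas)

lemma Im_of_real_mult: "Im (complex_of_real r * z) = r * Im z"
  by simp

lemma Im_ii_mult_power_kernel:
  "Im (\<i> * of_real y * (of_real x ^ k / (\<i> * of_real y - of_real x))) = - (x ^ Suc k * y / (x\<^sup>2 + y\<^sup>2))"
proof -
  have "\<i> * of_real y * (of_real x ^ k / (\<i> * of_real y - of_real x))
      = complex_of_real (x ^ k) * (\<i> * of_real y / (\<i> * of_real y - of_real x))"
    by simp
  also have "Im \<dots> = x ^ k * Im (\<i> * of_real y / (\<i> * of_real y - of_real x))"
    by (rule Im_of_real_mult)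
  also have "Im (\<i> * of_real y / (\<i> * of_real y - of_real x)) = - (x * y) / (x\<^sup>2 + y\<^sup>2)"
    by (simp add: Im_divide cmod_power2)
  finally show ?thesis by simp
qed

lemma damped_even_moment_integral:
  assumes M: "real_prob_measure M" and I: "integrable M (\<lambda>x. x ^ (2 * m))" and y: "0 < y"
  defines "h \<equiv> \<lambda>x. \<i> * of_real y * (of_real x ^ Suc (2 * m) / (\<i> * of_real y - of_real x))"
  shows "integrable M (\<lambda>x. x ^ (2 * m + 2) * (y\<^sup>2 / (x\<^sup>2 + y\<^sup>2)))"
    and "(\<integral>x. x ^ (2 * m + 2) * (y\<^sup>2 / (x\<^sup>2 + y\<^sup>2)) \<partial>M) = - y * Im (integral\<^sup>L M h)"
proof -
  interpret prob_space M using M by (rule prob_space_real_prob_measure)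
  have int_h: "integrable M h"
  proof (rule Bochner_Integration.integrable_bound[where f = "\<lambda>x. y * (2 * x ^ (2 * m))"])
    show "integrable M (\<lambda>x. y * (2 * x ^ (2 * m)))" using I by simp
    show "h \<in> borel_measurable M" unfolding h_def
      by (subst measurable_cong_sets[OF sets_real_prob_measure[OF M] refl]) measurable
    show "AE x in M. norm (h x) \<le> norm (y * (2 * x ^ (2 * m)))"
    proof (rule AE_I2)
      fix x :: real
      have "norm (\<i> * complex_of_real y) \<le> 1 * Im (\<i> * complex_of_real y)"
        using y by (simp add: norm_mult)
      from norm_power_div_diff_le_cone[OF _ this, of x "2 * m"]
      have "norm (\<i> * of_real y) * norm (of_real x ^ Suc (2 * m) / (\<i> * of_real y - of_real x))
          \<le> y * ((1 + 1) * \<bar>x\<bar> ^ (2 * m))"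
        using y by (intro mult_mono) (simp_all add: norm_mult)
      then have "norm (h x) \<le> y * ((1 + 1) * \<bar>x\<bar> ^ (2 * m))"
        unfolding h_def norm_mult[symmetric] .
      then show "norm (h x) \<le> norm (y * (2 * x ^ (2 * m)))"
        using y by (simp add: power_even_abs abs_mult)
    qed
  qed
  have pointwise: "x ^ (2 * m + 2) * (y\<^sup>2 / (x\<^sup>2 + y\<^sup>2)) = - y * Im (h x)" for x
    unfolding h_def Im_ii_mult_power_kernel using y by (simp add: field_simps power2_eq_square)
  show "integrable M (\<lambda>x. x ^ (2 * m + 2) * (y\<^sup>2 / (x\<^sup>2 + y\<^sup>2)))"
    unfolding pointwise using int_h by simp
  show "(\<integral>x. x ^ (2 * m + 2) * (y\<^sup>2 / (x\<^sup>2 + y\<^sup>2)) \<partial>M) = - y * Im (integral\<^sup>L M h)"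
    unfolding pointwise using integral_bounded_linear[OF bounded_linear_Im int_h] by simp
qed

text \<open>By \<open>cauchy_transform_remainder\<close> the damped integral is \<open>-y Im\<close> of \<open>iy\<close> times the remainder of
  \<open>G(iy)\<close> after its moment terms; the expansion identifies that product as \<open>A + b / (iy) + o(1 / y)\<close>.\<close>

lemma tendsto_damped_even_moment_integral:
  assumes M: "real_prob_measure M" and I: "integrable M (\<lambda>x. x ^ (2 * m))"
    and E: "has_poly_expansion (\<lambda>y. cauchy_transform M (\<i> * of_real y))
      (moment_poly M (2 * m) + monom (of_real A) (2 * m + 2) + monom (of_real b) (2 * m + 3)) (2 * m + 3)"
  shows "((\<lambda>y. \<integral>x. x ^ (2 * m + 2) * (y\<^sup>2 / (x\<^sup>2 + y\<^sup>2)) \<partial>M) \<longlongrightarrow> b) at_top"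
proof -
  let ?z = "\<lambda>y::real. \<i> * complex_of_real y"
  define R where "R y = (cauchy_transform M (?z y) - poly (moment_poly M (2 * m) + monom (of_real A) (2 * m + 2)
    + monom (of_real b) (2 * m + 3)) (1 / ?z y)) * ?z y ^ (2 * m + 3)" for y
  have R: "(R \<longlongrightarrow> 0) at_top"
    using E unfolding has_poly_expansion_def R_def[abs_def] .
  have damped: "Re (R y) + b = (\<integral>x. x ^ (2 * m + 2) * (y\<^sup>2 / (x\<^sup>2 + y\<^sup>2)) \<partial>M)" if y: "0 < y" for y
  proof -
    define v where "v = ?z y"
    have v: "v \<noteq> 0" "Im v > 0" using y by (simp_all add: v_def)
    define W where "W = v ^ Suc (2 * m)"
    have W: "W \<noteq> 0" using v by (simp add: W_def)
    have "v ^ (2 * m + 3) = W * v * v" "v ^ (2 * m + 2) = W * v"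
      by (simp_all add: W_def numeral_3_eq_3 numeral_2_eq_2 mult_ac)
    then have "cauchy_transform M v - poly (moment_poly M (2 * m)) (1 / v)
        = R y / (W * v * v) + of_real A / (W * v) + of_real b / (W * v * v)"
      using v W by (simp add: R_def poly_monom power_one_over field_simps flip: v_def)
    then have "v * ((cauchy_transform M v - poly (moment_poly M (2 * m)) (1 / v)) * W)
        = R y / v + of_real A + of_real b / v"
      using v W by (simp add: field_simps)
    then have "integral\<^sup>L M (\<lambda>x. v * (of_real x ^ Suc (2 * m) / (v - of_real x)))
        = R y / v + of_real A + of_real b / v"
      unfolding integral_mult_right_zero W_def cauchy_transform_remainder[OF M I v(2), symmetric] .
    moreover have "- y * Im (R y / v + of_real A + of_real b / v) = Re (R y) + b"
      using y by (simp add: v_def Im_divide power2_eq_square field_simps)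
    ultimately show ?thesis
      using damped_even_moment_integral(2)[OF M I y] by (simp add: v_def)
  qed
  have "((\<lambda>y. Re (R y) + b) \<longlongrightarrow> b) at_top"
    using tendsto_add[OF tendsto_Re[OF R] tendsto_const, of b] by simp
  moreover have "eventually (\<lambda>y. Re (R y) + b = (\<integral>x. x ^ (2 * m + 2) * (y\<^sup>2 / (x\<^sup>2 + y\<^sup>2)) \<partial>M)) at_top"
    using eventually_gt_at_top[of 0] by eventually_elim (rule damped)
  ultimately show ?thesis
    by (rule Lim_transform_eventually)
qed

lemma integrable_even_moment_Suc:
  assumes M: "real_prob_measure M" and I: "integrable M (\<lambda>x. x ^ (2 * m))"
    and E: "has_poly_expansion (\<lambda>y. cauchy_transform M (\<i> * of_real y))
      (cauchy_series_poly (\<lambda>k. complex_of_real (a k)) N) (2 * m + 3)"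
    and N: "2 * m + 2 \<le> N"
  shows "integrable M (\<lambda>x. x ^ (2 * m + 2))"
proof (rule integrable_of_tendsto_damped_integral)
  have "a k = moment M k" if "k \<le> 2 * m" for k
    using moment_eq_coeff_of_expansion[OF M I E _ that] that N
    by (simp add: coeff_cauchy_series_poly)
  then have "has_poly_expansion (\<lambda>y. cauchy_transform M (\<i> * of_real y))
      (moment_poly M (2 * m) + monom (of_real (a (2 * m + 1))) (2 * m + 2)
        + monom (of_real (a (2 * m + 2))) (2 * m + 3)) (2 * m + 3)"
    using N by (intro has_poly_expansion_coeff_cong[OF E])
      (auto simp: moment_poly_def coeff_cauchy_series_poly)
  then show "((\<lambda>y. \<integral>x. x ^ (2 * m + 2) * (y\<^sup>2 / (x\<^sup>2 + y\<^sup>2)) \<partial>M) \<longlongrightarrow> a (2 * m + 2)) at_top"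
    by (rule tendsto_damped_even_moment_integral[OF M I])
  show "(\<lambda>x. x ^ (2 * m + 2)) \<in> borel_measurable M"
    by (simp add: measurable_cong_sets[OF sets_real_prob_measure[OF M] refl])
  show "0 \<le> x ^ (2 * m + 2)" for x :: real
    by (rule zero_le_even_power) simp
qed (rule damped_even_moment_integral(1)[OF M I])

lemma integrable_of_cauchy_expansion:
  assumes M: "real_prob_measure M"
    and E: "has_poly_expansion (\<lambda>y. cauchy_transform M (\<i> * of_real y))
      (cauchy_series_poly (\<lambda>k. complex_of_real (a k)) (2 * n)) (Suc (2 * n))"
  shows "integrable M (\<lambda>x. x ^ (2 * n))"
proof -
  have "integrable M (\<lambda>x. x ^ (2 * m))" if "m \<le> n" for m
    using that
  proof (induction m)
    case 0
    interpret prob_space M using M by (rule prob_space_real_prob_measure)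
    show ?case by simp
  next
    case (Suc m)
    have "has_poly_expansion (\<lambda>y. cauchy_transform M (\<i> * of_real y))
        (cauchy_series_poly (\<lambda>k. complex_of_real (a k)) (2 * n)) (2 * m + 3)"
      using Suc.prems by (intro has_poly_expansion_mono[OF E]) simp
    from integrable_even_moment_Suc[OF M _ this] Suc show ?case by simp
  qed
  then show ?thesis by simp
qed

section \<open>Monotone convolution\<close>

lemma F_transform_ii_nontangential:
  assumes "real_prob_measure \<nu>"
  shows "eventually (\<lambda>y. y / 2 \<le> Im (F_transform \<nu> (\<i> * of_real y)) \<and>
    norm (F_transform \<nu> (\<i> * of_real y)) \<le> 3 * Im (F_transform \<nu> (\<i> * of_real y))) at_top"
proof -
  define q where "q y = 1 / (\<i> * of_real y * cauchy_transform \<nu> (\<i> * of_real y))" for y :: real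
  have "(q \<longlongrightarrow> 1 / 1) at_top"
    unfolding q_def[abs_def] by (intro tendsto_divide tendsto_const tendsto_ii_mult_cauchy_transform assms) simp
  then have "eventually (\<lambda>y. dist (q y) 1 < 1 / 2) at_top"
    by (intro tendstoD) simp_all
  then show ?thesis
    using eventually_gt_at_top[of 0]
  proof eventually_elim
    case (elim y)
    have F: "F_transform \<nu> (\<i> * of_real y) = \<i> * of_real y * q y"
      using elim(2) by (simp add: F_transform_def q_def)
    have "norm (q y - 1) < 1 / 2"
      using elim(1) by (simp add: dist_norm)
    then have "1 / 2 \<le> Re (q y)" and "norm (q y) \<le> 3 * Re (q y)"
      using abs_Re_le_cmod[of "q y - 1"] norm_triangle_ineq[of "q y - 1" 1]
      by (simp_all add: abs_le_iff)
    then show ?case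
      using elim(2) by (simp add: F norm_mult)
  qed
qed

lemma cauchy_transform_monotone_convolution_remainder:
  assumes \<mu>: "real_prob_measure \<mu>" and \<nu>: "real_prob_measure \<nu>"
    and conv: "is_monotone_convolution \<mu> \<nu> \<rho>" and I: "integrable \<mu> (\<lambda>x. x ^ (2 * n))"
  shows "((\<lambda>y. (cauchy_transform \<rho> (\<i> * of_real y) - poly (moment_poly \<mu> (2 * n)) (cauchy_transform \<nu> (\<i> * of_real y)))
    * (\<i> * of_real y) ^ Suc (2 * n)) \<longlongrightarrow> 0) at_top"
proof -
  let ?z = "\<lambda>y::real. \<i> * complex_of_real y"
  define w where "w y = F_transform \<nu> (?z y)" for y
  note w_bounds = F_transform_ii_nontangential[OF \<nu>, folded w_def]
  have "filterlim (\<lambda>y. Im (w y)) at_top at_top"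
  proof (rule filterlim_at_top_mono)
    show "filterlim (\<lambda>y::real. 1 / 2 * y) at_top at_top"
      by (rule filterlim_tendsto_pos_mult_at_top[OF tendsto_const _ filterlim_ident]) simp
  qed (use w_bounds in \<open>auto elim: eventually_mono\<close>)
  moreover have "eventually (\<lambda>y. norm (w y) \<le> 3 * Im (w y)) at_top"
    using w_bounds by (rule eventually_mono) simp
  ultimately have lim_w: "((\<lambda>y. (cauchy_transform \<mu> (w y) - poly (moment_poly \<mu> (2 * n)) (1 / w y)) * w y ^ Suc (2 * n))
      \<longlongrightarrow> 0) at_top"
    by (rule cauchy_transform_expansion_nontangential[OF \<mu> I])
  have "((\<lambda>y. (cauchy_transform \<mu> (w y) - poly (moment_poly \<mu> (2 * n)) (1 / w y)) * w y ^ Suc (2 * n)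
      * (?z y * cauchy_transform \<nu> (?z y)) ^ Suc (2 * n)) \<longlongrightarrow> 0) at_top"
    using tendsto_mult[OF lim_w tendsto_power[OF tendsto_ii_mult_cauchy_transform[OF \<nu>]]]
    by (rule tendsto_eq_rhs) simp
  moreover have "eventually (\<lambda>y. (cauchy_transform \<mu> (w y) - poly (moment_poly \<mu> (2 * n)) (1 / w y)) * w y ^ Suc (2 * n)
      * (?z y * cauchy_transform \<nu> (?z y)) ^ Suc (2 * n)
      = (cauchy_transform \<rho> (?z y) - poly (moment_poly \<mu> (2 * n)) (cauchy_transform \<nu> (?z y)))
        * ?z y ^ Suc (2 * n)) at_top"
    using w_bounds eventually_gt_at_top[of 0]
  proof eventually_elim
    case (elim y)
    then have "(w y * (?z y * (1 / w y))) ^ Suc (2 * n) = ?z y ^ Suc (2 * n)" by auto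
    moreover have G_\<nu>: "cauchy_transform \<nu> (?z y) = 1 / w y"
      by (simp add: w_def F_transform_def)
    moreover have "F_transform \<rho> (?z y) = F_transform \<mu> (w y)"
      using conv elim(2) unfolding is_monotone_convolution_def w_def by simp
    then have "cauchy_transform \<rho> (?z y) = cauchy_transform \<mu> (w y)"
      by (simp add: F_transform_def)
    ultimately show ?case
      by (simp only: G_\<nu> mult.assoc flip: power_mult_distrib)
  qed
  ultimately show ?thesis by (rule Lim_transform_eventually)
qed

definition monotone_moment :: "real measure \<Rightarrow> real measure \<Rightarrow> nat \<Rightarrow> real" where
  "monotone_moment \<mu> \<nu> l = (\<Sum>k\<le>l. moment \<mu> k *
    (\<Sum>js\<in>weak_compositions (Suc k) (l - k). prod_list (map (moment \<nu>) js)))"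

lemma of_real_prod_list: "of_real (prod_list xs) = prod_list (map of_real xs)"
  by (induction xs) simp_all

lemma coeff_pcompose_moment_poly:
  assumes "d \<le> Suc N"
  shows "coeff (pcompose (moment_poly \<mu> N) (moment_poly \<nu> N)) d =
    coeff (cauchy_series_poly (\<lambda>l. complex_of_real (monotone_moment \<mu> \<nu> l)) N) d"
  using assms
  by (cases d) (simp_all add: moment_poly_def monotone_moment_def coeff_pcompose_cauchy_series_poly
      coeff_cauchy_series_poly poly_cauchy_series_poly of_real_prod_list o_def)

lemma has_poly_expansion_monotone_convolution:
  assumes "real_prob_measure \<mu>" and "real_prob_measure \<nu>" and "is_monotone_convolution \<mu> \<nu> \<rho>"
    and "integrable \<mu> (\<lambda>x. x ^ (2 * n))" and "integrable \<nu> (\<lambda>x. x ^ (2 * n))"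
  shows "has_poly_expansion (\<lambda>y. cauchy_transform \<rho> (\<i> * of_real y))
    (cauchy_series_poly (\<lambda>l. complex_of_real (monotone_moment \<mu> \<nu> l)) (2 * n)) (Suc (2 * n))"
proof (rule has_poly_expansion_coeff_cong)
  show "has_poly_expansion (\<lambda>y. cauchy_transform \<rho> (\<i> * of_real y))
      (pcompose (moment_poly \<mu> (2 * n)) (moment_poly \<nu> (2 * n))) (Suc (2 * n))"
    using cauchy_transform_monotone_convolution_remainder[OF assms(1-4)]
      has_poly_expansion_poly_comp[OF has_poly_expansion_cauchy_transform[OF assms(2,5)]]
    by (rule has_poly_expansion_transfer)
qed (simp add: coeff_pcompose_moment_poly)

theorem proposition4p9:
  fixes \<mu> \<nu> \<rho> :: "real measure" and n :: nat
  assumes "real_prob_measure \<mu>" and "real_prob_measure \<nu>"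
    and "is_monotone_convolution \<mu> \<nu> \<rho>"
    and "n \<ge> 1"
    and "integrable \<mu> (\<lambda>x. x ^ (2 * n))" and "integrable \<nu> (\<lambda>x. x ^ (2 * n))"
  shows "integrable \<rho> (\<lambda>x. x ^ (2 * n)) \<and>
    (\<forall>l\<in>{1..2 * n}. moment \<rho> l = moment \<mu> l + moment \<nu> l +
       (\<Sum>k = 1..l - 1. \<Sum>js\<in>{js. length js = Suc k \<and> sum_list js = l - k}.
          moment \<mu> k * prod_list (map (moment \<nu>) js)))"
proof -
  have \<rho>: "real_prob_measure \<rho>"
    using assms(3) by (simp add: is_monotone_convolution_def)
  note E = has_poly_expansion_monotone_convolution[OF assms(1-3,5,6)]
  have I: "integrable \<rho> (\<lambda>x. x ^ (2 * n))"
    by (rule integrable_of_cauchy_expansion[OF \<rho> E])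
  have "moment \<rho> l = monotone_moment \<mu> \<nu> l" if "l \<le> 2 * n" for l
    using moment_eq_coeff_of_expansion[OF \<rho> I E order.refl that] that
    by (simp add: coeff_cauchy_series_poly)
  then show ?thesis
    using I sum_weak_compositions_split_ends[of "moment \<mu>" "moment \<nu>"] moment_0[OF assms(1)] moment_0[OF assms(2)]
    by (simp add: monotone_moment_def)
qed

end
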